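(* Let $X,Y$ be normed spaces over $K$ and $M>0$. The set $B^M(X,Y)$ of all topology bounded $M$-contraction operators from $X$ into $Y$ is a subset of $B(X,Y)$ and is closed in the normed space $(B(X,Y),\|\cdot\|_{B(X,Y)})$.
   Context: $K$ is $\mathbb{R}$ or $\mathbb{C}$; normed spaces are nontrivial; operators are arbitrary maps. $\|F\|_{B(X,Y)}=\max\left(\sup_{x\neq 0,x\in X}\frac{\|F(x)\|_Y}{\|x\|_X},\ \|F(0)\|_Y\right)$ and $B(X,Y)$ is the set of maps $F:X\to Y$ for which this is finite; it is a normed space under pointwise operations with norm $\|\cdot\|_{B(X,Y)}$. A map $F$ is topology bounded if it maps bounded sets of $X$ to bounded sets of $Y$. $F$ is an $M$-contraction operator if $\|F(kx)\|_Y\le M|k|\,\|F(x)\|_Y$ for every scalar $k\neq0$ and every $x\neq 0$. *)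

theory Defs
  imports "HOL-Analysis.Analysis"
begin

definition Bset :: "('a::real_normed_vector \<Rightarrow> 'b::real_normed_vector) set" where
  "Bset = {F. bdd_above ((\<lambda>x. norm (F x) / norm x) ` (- {0}))}"

definition bnorm :: "('a::real_normed_vector \<Rightarrow> 'b::real_normed_vector) \<Rightarrow> real" where
  "bnorm F = max (Sup ((\<lambda>x. norm (F x) / norm x) ` (- {0}))) (norm (F 0))"

definition topo_bounded :: "('a::real_normed_vector \<Rightarrow> 'b::real_normed_vector) \<Rightarrow> bool" where
  "topo_bounded F \<longleftrightarrow> (\<forall>S. bounded S \<longrightarrow> bounded (F ` S))"

definition contraction_R :: "real \<Rightarrow> ('a::real_normed_vector \<Rightarrow> 'b::real_normed_vector) \<Rightarrow> bool" where
  "contraction_R M F \<longleftrightarrow>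
     (\<forall>k::real. \<forall>x. k \<noteq> 0 \<longrightarrow> x \<noteq> 0 \<longrightarrow> norm (F (k *\<^sub>R x)) \<le> M * \<bar>k\<bar> * norm (F x))"

text \<open>A complex normed space structure on a real normed vector space:
  a complex scalar multiplication sc extending scaleR, satisfying the module laws
  and absolute homogeneity of the norm.\<close>
definition complex_normed_scaling :: "(complex \<Rightarrow> 'a::real_normed_vector \<Rightarrow> 'a) \<Rightarrow> bool" where
  "complex_normed_scaling sc \<longleftrightarrow>
     (\<forall>a b x. sc a (sc b x) = sc (a * b) x) \<and>
     (\<forall>x. sc 1 x = x) \<and>
     (\<forall>a x y. sc a (x + y) = sc a x + sc a y) \<and>
     (\<forall>a b x. sc (a + b) x = sc a x + sc b x) \<and>
     (\<forall>r x. sc (complex_of_real r) x = r *\<^sub>R x) \<and>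
     (\<forall>a x. norm (sc a x) = cmod a * norm x)"

definition contraction_C :: "(complex \<Rightarrow> 'a::real_normed_vector \<Rightarrow> 'a) \<Rightarrow> real \<Rightarrow> ('a \<Rightarrow> 'b::real_normed_vector) \<Rightarrow> bool" where
  "contraction_C sc M F \<longleftrightarrow>
     (\<forall>k::complex. \<forall>x. k \<noteq> 0 \<longrightarrow> x \<noteq> 0 \<longrightarrow> norm (F (sc k x)) \<le> M * cmod k * norm (F x))"

definition BM_R :: "real \<Rightarrow> ('a::real_normed_vector \<Rightarrow> 'b::real_normed_vector) set" where
  "BM_R M = {F. topo_bounded F \<and> contraction_R M F}"

definition BM_C :: "(complex \<Rightarrow> 'a::real_normed_vector \<Rightarrow> 'a) \<Rightarrow> real \<Rightarrow> ('a \<Rightarrow> 'b::real_normed_vector) set" where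
  "BM_C sc M = {F. topo_bounded F \<and> contraction_C sc M F}"

definition Btop :: "('a::real_normed_vector \<Rightarrow> 'b::real_normed_vector) topology" where
  "Btop = Metric_space.mtopology Bset (\<lambda>F G. bnorm (F - G))"

end

theory Submission
  imports Defs "HOL-Library.Function_Algebras"
begin

text \<open>A topology bounded M-contraction is bounded by some C on the unit sphere, and
  scaling a unit vector by t gives norm (F (t u)) \<le> M C t, so it lies in B(X,Y).
  Point evaluations F \<mapsto> F x are continuous for the norm of B(X,Y), hence each
  single contraction inequality cuts out a closed subset of B(X,Y), and B^M(X,Y)
  is the intersection of these. Over the complex numbers, the real scalars act
  through the complex scalar multiplication, so complex M-contractions are real ones.\<close>

lemma bnorm_nonneg: "0 \<le> bnorm F"
  unfolding bnorm_def by (simp add: le_max_iff_disj)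

lemma norm_apply_zero_le_bnorm: "norm (F 0) \<le> bnorm F"
  unfolding bnorm_def by simp

lemma bnorm_uminus: "bnorm (- F) = bnorm F"
  unfolding bnorm_def by simp

lemma norm_apply_le_bnorm:
  assumes "F \<in> Bset" "x \<noteq> 0"
  shows "norm (F x) \<le> bnorm F * norm x"
proof -
  have "norm (F x) / norm x \<le> Sup ((\<lambda>x. norm (F x) / norm x) ` (- {0}))"
    using assms by (intro cSup_upper) (auto simp: Bset_def)
  also have "\<dots> \<le> bnorm F"
    unfolding bnorm_def by simp
  finally show ?thesis
    using assms(2) by (simp add: divide_le_eq)
qed

lemma norm_apply_le_bnorm_max:
  assumes "F \<in> Bset"
  shows "norm (F x) \<le> bnorm F * max 1 (norm x)"
proof (cases "x = 0")
  case True
  then show ?thesis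
    using norm_apply_zero_le_bnorm[of F] by simp
next
  case False
  have "bnorm F * norm x \<le> bnorm F * max 1 (norm x)"
    using bnorm_nonneg[of F] by (intro mult_left_mono) auto
  with norm_apply_le_bnorm[OF assms False] show ?thesis
    by linarith
qed

lemma BsetI:
  assumes "\<And>x. x \<noteq> 0 \<Longrightarrow> norm (F x) \<le> C * norm x"
  shows "F \<in> Bset"
proof -
  have "norm (F x) / norm x \<le> C" if "x \<noteq> 0" for x
    using assms[OF that] that by (simp add: divide_le_eq)
  then show ?thesis
    unfolding Bset_def by (auto intro!: bdd_aboveI2)
qed

lemma Bset_add:
  assumes "F \<in> Bset" "G \<in> Bset"
  shows "F + G \<in> Bset"
proof (rule BsetI)
  fix x :: 'a assume x: "x \<noteq> 0"
  show "norm ((F + G) x) \<le> (bnorm F + bnorm G) * norm x"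
    using norm_apply_le_bnorm[OF assms(1) x] norm_apply_le_bnorm[OF assms(2) x]
      norm_triangle_ineq[of "F x" "G x"]
    by (simp add: algebra_simps)
qed

lemma Bset_uminus: "F \<in> Bset \<Longrightarrow> - F \<in> Bset"
  unfolding Bset_def by simp

lemma Bset_diff: "F \<in> Bset \<Longrightarrow> G \<in> Bset \<Longrightarrow> F - G \<in> Bset"
  using Bset_add[OF _ Bset_uminus, of F G] by simp

lemma bnorm_triangle:
  fixes F G :: "'a::real_normed_vector \<Rightarrow> 'b::real_normed_vector"
  assumes "F \<in> Bset" "G \<in> Bset" "\<exists>x::'a. x \<noteq> 0"
  shows "bnorm (F + G) \<le> bnorm F + bnorm G"
proof -
  have "Sup ((\<lambda>x. norm ((F + G) x) / norm x) ` (- {0})) \<le> bnorm F + bnorm G"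
  proof (rule cSup_least)
    show "(\<lambda>x. norm ((F + G) x) / norm x) ` (- {0}) \<noteq> {}"
      using assms(3) by auto
  next
    fix y assume "y \<in> (\<lambda>x. norm ((F + G) x) / norm x) ` (- {0})"
    then obtain x where x: "x \<noteq> 0" "y = norm ((F + G) x) / norm x"
      by auto
    have "norm ((F + G) x) \<le> (bnorm F + bnorm G) * norm x"
      using norm_apply_le_bnorm[OF assms(1) x(1)] norm_apply_le_bnorm[OF assms(2) x(1)]
        norm_triangle_ineq[of "F x" "G x"]
      by (simp add: algebra_simps)
    then show "y \<le> bnorm F + bnorm G"
      using x by (simp add: divide_le_eq)
  qed
  moreover have "norm ((F + G) 0) \<le> bnorm F + bnorm G"
    using norm_apply_zero_le_bnorm[of F] norm_apply_zero_le_bnorm[of G]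
      norm_triangle_ineq[of "F 0" "G 0"]
    by simp
  ultimately show ?thesis
    unfolding bnorm_def[of "F + G"] by simp
qed

lemma bnorm_eq_0_iff:
  fixes F :: "'a::real_normed_vector \<Rightarrow> 'b::real_normed_vector"
  assumes "F \<in> Bset" "\<exists>x::'a. x \<noteq> 0"
  shows "bnorm F = 0 \<longleftrightarrow> F = 0"
proof
  assume F: "bnorm F = 0"
  show "F = 0"
  proof
    fix x
    show "F x = 0 x"
      using norm_apply_le_bnorm_max[OF assms(1), of x] F by simp
  qed
next
  assume "F = 0"
  then have "(\<lambda>x. norm (F x) / norm x) ` (- {0}) = {0}"
    using assms(2) by auto
  with \<open>F = 0\<close> show "bnorm F = 0"
    unfolding bnorm_def by simp
qed

lemma Metric_space_Bset:
  assumes "\<exists>x::'a::real_normed_vector. x \<noteq> 0"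
  shows "Metric_space (Bset :: ('a \<Rightarrow> 'b::real_normed_vector) set) (\<lambda>F G. bnorm (F - G))"
proof
  fix F G :: "'a \<Rightarrow> 'b"
  show "0 \<le> bnorm (F - G)"
    by (rule bnorm_nonneg)
  show "bnorm (F - G) = bnorm (G - F)"
    by (metis bnorm_uminus minus_diff_eq)
next
  fix F G :: "'a \<Rightarrow> 'b"
  assume "F \<in> Bset" "G \<in> Bset"
  then show "bnorm (F - G) = 0 \<longleftrightarrow> F = G"
    using bnorm_eq_0_iff[OF Bset_diff assms] by simp
next
  fix F G H :: "'a \<Rightarrow> 'b"
  assume "F \<in> Bset" "G \<in> Bset" "H \<in> Bset"
  then show "bnorm (F - H) \<le> bnorm (F - G) + bnorm (G - H)"
    using bnorm_triangle[OF Bset_diff Bset_diff assms, of F G G H] by simp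
qed

lemma topspace_Btop:
  assumes "\<exists>x::'a::real_normed_vector. x \<noteq> 0"
  shows "topspace (Btop :: ('a \<Rightarrow> 'b::real_normed_vector) topology) = Bset"
  unfolding Btop_def using Metric_space.topspace_mtopology[OF Metric_space_Bset[OF assms]] .

lemma continuous_map_Btop_apply:
  assumes "\<exists>x::'a::real_normed_vector. x \<noteq> 0"
  shows "continuous_map (Btop :: ('a \<Rightarrow> 'b::real_normed_vector) topology) euclidean (\<lambda>F. F a)"
proof -
  interpret B: Metric_space "Bset :: ('a \<Rightarrow> 'b) set" "\<lambda>F G. bnorm (F - G)"
    by (rule Metric_space_Bset[OF assms])
  have "\<exists>r>0. \<forall>G. G \<in> Bset \<and> bnorm (F - G) < r \<longrightarrow> G a \<in> U"
    if F: "F \<in> Bset" and U: "open U" "F a \<in> U" for F and U :: "'b set"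
  proof -
    obtain e where e: "e > 0" "ball (F a) e \<subseteq> U"
      using U open_contains_ball by blast
    define r where "r = e / max 1 (norm a)"
    have "G a \<in> U" if G: "G \<in> Bset" "bnorm (F - G) < r" for G
    proof -
      have "dist (G a) (F a) \<le> bnorm (F - G) * max 1 (norm a)"
        using norm_apply_le_bnorm_max[OF Bset_diff[OF F G(1)], of a]
        by (simp add: dist_norm norm_minus_commute)
      also have "\<dots> < e"
        using G(2) by (simp add: r_def pos_less_divide_eq)
      finally show ?thesis
        using e(2) by (auto simp: dist_commute)
    qed
    moreover have "r > 0"
      using e(1) by (simp add: r_def)
    ultimately show ?thesis
      by blast
  qed
  then show ?thesis
    unfolding Btop_def B.continuous_map_from_metric by auto
qed

lemma closedin_Btop_norm_le:
  assumes "\<exists>x::'a::real_normed_vector. x \<noteq> 0"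
  shows "closedin (Btop :: ('a \<Rightarrow> 'b::real_normed_vector) topology)
           {F \<in> Bset. norm (F a) \<le> c * norm (F b)}"
proof -
  have "continuous_map Btop euclideanreal (\<lambda>F :: 'a \<Rightarrow> 'b. c * norm (F b) - norm (F a))"
    using continuous_map_Btop_apply[OF assms]
    by (intro continuous_map_diff continuous_map_real_mult_left continuous_map_norm)
  from closedin_continuous_map_preimage[OF this, of "{0..}"] show ?thesis
    by (simp add: topspace_Btop[OF assms])
qed

lemma closedin_Btop_norm_le_all:
  assumes "\<exists>x::'a::real_normed_vector. x \<noteq> 0"
  shows "closedin (Btop :: ('a \<Rightarrow> 'b::real_normed_vector) topology)
           {F \<in> Bset. \<forall>i\<in>I. norm (F (a i)) \<le> c i * norm (F (b i))}"
proof -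
  have eq: "{F \<in> Bset. \<forall>i\<in>I. norm (F (a i)) \<le> c i * norm (F (b i))} =
        \<Inter> (insert Bset ((\<lambda>i. {F \<in> Bset. norm (F (a i)) \<le> c i * norm (F (b i))}) ` I))"
    by auto
  have "closedin (Btop :: ('a \<Rightarrow> 'b) topology) Bset"
    by (metis closedin_topspace topspace_Btop[OF assms])
  then show ?thesis
    unfolding eq by (intro closedin_Inter) (auto intro: closedin_Btop_norm_le[OF assms])
qed

lemma Bset_imp_topo_bounded:
  fixes F :: "'a::real_normed_vector \<Rightarrow> 'b::real_normed_vector"
  assumes "F \<in> Bset"
  shows "topo_bounded F"
  unfolding topo_bounded_def
proof (intro allI impI)
  fix S :: "'a set" assume "bounded S"
  then obtain R where R: "\<And>x. x \<in> S \<Longrightarrow> norm x \<le> R"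
    by (auto simp: bounded_iff)
  have "norm (F x) \<le> bnorm F * max 1 R" if "x \<in> S" for x
  proof -
    have "bnorm F * max 1 (norm x) \<le> bnorm F * max 1 R"
      using R[OF that] bnorm_nonneg[of F] by (intro mult_left_mono) auto
    with norm_apply_le_bnorm_max[OF assms] show ?thesis
      by (rule order_trans)
  qed
  then show "bounded (F ` S)"
    by (intro boundedI) blast
qed

lemma contraction_R_imp_Bset:
  fixes F :: "'a::real_normed_vector \<Rightarrow> 'b::real_normed_vector"
  assumes "0 \<le> M" "topo_bounded F" "contraction_R M F"
  shows "F \<in> Bset"
proof -
  have "bounded (F ` sphere 0 1)"
    using assms(2) bounded_subset[OF bounded_cball sphere_cball]
    unfolding topo_bounded_def by blast
  then obtain C where "\<forall>y \<in> F ` sphere 0 1. norm y \<le> C"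
    by (auto simp: bounded_iff)
  then have C: "\<And>u. norm u = 1 \<Longrightarrow> norm (F u) \<le> C"
    by simp
  show ?thesis
  proof (rule BsetI)
    fix x :: 'a assume x: "x \<noteq> 0"
    define u where "u = inverse (norm x) *\<^sub>R x"
    have u: "norm u = 1" "u \<noteq> 0" "x = norm x *\<^sub>R u"
      using x by (auto simp: u_def)
    have "norm (F x) \<le> M * norm x * norm (F u)"
      using assms(3) x u unfolding contraction_R_def
      by (metis abs_norm_cancel norm_eq_zero)
    also have "\<dots> \<le> M * norm x * C"
      using C[OF u(1)] assms(1) by (intro mult_left_mono) auto
    finally show "norm (F x) \<le> (M * C) * norm x"
      by (simp add: algebra_simps)
  qed
qed

lemma contraction_C_imp_contraction_R:
  fixes sc :: "complex \<Rightarrow> 'a::real_normed_vector \<Rightarrow> 'a"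
  assumes "complex_normed_scaling sc" "contraction_C sc M F"
  shows "contraction_R M F"
  unfolding contraction_R_def
proof (intro allI impI)
  fix k :: real and x :: 'a assume "k \<noteq> 0" "x \<noteq> 0"
  then have "norm (F (sc (complex_of_real k) x)) \<le> M * cmod (complex_of_real k) * norm (F x)"
    using assms(2)[unfolded contraction_C_def, rule_format, of "complex_of_real k" x] by simp
  then show "norm (F (k *\<^sub>R x)) \<le> M * \<bar>k\<bar> * norm (F x)"
    using assms(1) unfolding complex_normed_scaling_def by simp
qed

lemma BM_R_eq:
  assumes "0 \<le> M"
  shows "BM_R M = {F \<in> Bset. \<forall>i\<in>{i. fst i \<noteq> 0 \<and> snd i \<noteq> 0}.
                     norm (F (fst i *\<^sub>R snd i)) \<le> M * \<bar>fst i\<bar> * norm (F (snd i))}"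
  using contraction_R_imp_Bset[OF assms] Bset_imp_topo_bounded
  unfolding BM_R_def contraction_R_def by fastforce

lemma BM_C_eq:
  assumes "0 \<le> M" "complex_normed_scaling sc"
  shows "BM_C sc M = {F \<in> Bset. \<forall>i\<in>{i. fst i \<noteq> 0 \<and> snd i \<noteq> 0}.
                        norm (F (sc (fst i) (snd i))) \<le> M * cmod (fst i) * norm (F (snd i))}"
proof -
  have "F \<in> Bset" if "F \<in> BM_C sc M" for F
    using that contraction_R_imp_Bset[OF assms(1)] contraction_C_imp_contraction_R[OF assms(2)]
    unfolding BM_C_def by blast
  then show ?thesis
    using Bset_imp_topo_bounded unfolding BM_C_def contraction_C_def by auto
qed

theorem theorem2:
  fixes M :: real
    and scX :: "complex \<Rightarrow> 'c::real_normed_vector \<Rightarrow> 'c"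
    and scY :: "complex \<Rightarrow> 'd::real_normed_vector \<Rightarrow> 'd"
  assumes "M > 0"
  shows "((\<exists>x::'a::real_normed_vector. x \<noteq> 0) \<longrightarrow> (\<exists>y::'b::real_normed_vector. y \<noteq> 0) \<longrightarrow>
            (BM_R M :: ('a \<Rightarrow> 'b) set) \<subseteq> Bset \<and> closedin Btop (BM_R M :: ('a \<Rightarrow> 'b) set))
       \<and> (complex_normed_scaling scX \<longrightarrow> complex_normed_scaling scY \<longrightarrow>
            (\<exists>x::'c. x \<noteq> 0) \<longrightarrow> (\<exists>y::'d. y \<noteq> 0) \<longrightarrow>
            (BM_C scX M :: ('c \<Rightarrow> 'd) set) \<subseteq> Bset \<and> closedin Btop (BM_C scX M :: ('c \<Rightarrow> 'd) set))"
proof (intro conjI impI)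
  assume "\<exists>x::'a. x \<noteq> 0"
  then show "closedin Btop (BM_R M :: ('a \<Rightarrow> 'b) set)"
    unfolding BM_R_eq[OF less_imp_le[OF assms]] by (rule closedin_Btop_norm_le_all)
  show "(BM_R M :: ('a \<Rightarrow> 'b) set) \<subseteq> Bset"
    unfolding BM_R_eq[OF less_imp_le[OF assms]] by (rule Collect_restrict)
next
  assume sc: "complex_normed_scaling scX" and "\<exists>x::'c. x \<noteq> 0"
  from this(2) show "closedin Btop (BM_C scX M :: ('c \<Rightarrow> 'd) set)"
    unfolding BM_C_eq[OF less_imp_le[OF assms] sc] by (rule closedin_Btop_norm_le_all)
  show "(BM_C scX M :: ('c \<Rightarrow> 'd) set) \<subseteq> Bset"
    unfolding BM_C_eq[OF less_imp_le[OF assms] sc] by (rule Collect_restrict)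
qed

end
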